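(* Let $G=A*_C\varphi$ with $|A/C|\ge2$, $|A/\varphi(C)|\ge2$ and generating set $\{t\}\cup(A\setminus\{1\})$. Let $w=t^{n_1}a_1t^{n_2}a_2\cdots t^{n_I}a_I$ be the word (of length $\sum_i|n_i|+I$) with $a_i\in A\setminus\{1\}$ single letters and $n_i\in\mathbb{Z}\setminus\{0\}$. Suppose either Condition I: $n_1,n_3,n_5,\dots>0$, $n_2,n_4,\dots<0$, $a_1,a_3,a_5,\dots\notin C$, $a_2,a_4,\dots\notin\varphi(C)$; or Condition II: $n_1,n_3,\dots<0$, $n_2,n_4,\dots>0$, $a_1,a_3,\dots\notin\varphi(C)$, $a_2,a_4,\dots\notin C$. Then $w$ is a geodesic, i.e. its length equals the minimal length of a word representing $\bar w$.
   Context: $A$ is a group, $C\le A$, $\varphi:C\to A$ an injective homomorphism, $G=A*_C\varphi=\langle A,t\mid c=t^{-1}\varphi(c)t\ \forall c\in C\rangle$. Words are finite sequences of letters from $\{t,t^{-1}\}\cup(A\setminus\{1\})$, $t^{n}$ denoting $|n|$ consecutive letters $t^{\pm1}$; $\bar w$ is the element represented. *)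

theory Defs
  imports "HOL-Algebra.Group"
begin

datatype 'a letter = T | Tinv | L 'a

definition valid_word :: "('a, 'b) monoid_scheme \<Rightarrow> 'a letter list \<Rightarrow> bool" where
  "valid_word A w \<longleftrightarrow> (\<forall>a. L a \<in> set w \<longrightarrow> a \<in> carrier A \<and> a \<noteq> \<one>\<^bsub>A\<^esub>)"

text \<open>Equality of represented elements in G = A *_C phi: the congruence on words
  generated by the (monoid) presentation of G: t t^-1 = 1, t^-1 t = 1, the
  multiplication table of A, and t c = phi(c) t for c in C
  (equivalent to c = t^-1 phi(c) t).\<close>
inductive hnn_eq :: "('a, 'b) monoid_scheme \<Rightarrow> 'a set \<Rightarrow> ('a \<Rightarrow> 'a)
    \<Rightarrow> 'a letter list \<Rightarrow> 'a letter list \<Rightarrow> bool"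
  for A C \<phi> where
  refl: "hnn_eq A C \<phi> u u"
| sym: "hnn_eq A C \<phi> u v \<Longrightarrow> hnn_eq A C \<phi> v u"
| trans: "hnn_eq A C \<phi> u v \<Longrightarrow> hnn_eq A C \<phi> v w \<Longrightarrow> hnn_eq A C \<phi> u w"
| ctxt: "hnn_eq A C \<phi> u v \<Longrightarrow> hnn_eq A C \<phi> (x @ u @ y) (x @ v @ y)"
| t_tinv: "hnn_eq A C \<phi> [T, Tinv] []"
| tinv_t: "hnn_eq A C \<phi> [Tinv, T] []"
| one: "hnn_eq A C \<phi> [L \<one>\<^bsub>A\<^esub>] []"
| mult: "a \<in> carrier A \<Longrightarrow> b \<in> carrier A \<Longrightarrow> hnn_eq A C \<phi> [L a, L b] [L (a \<otimes>\<^bsub>A\<^esub> b)]"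
| conj: "c \<in> C \<Longrightarrow> hnn_eq A C \<phi> [T, L c] [L (\<phi> c), T]"

definition tpow :: "int \<Rightarrow> 'a letter list" where
  "tpow n = replicate (nat \<bar>n\<bar>) (if n > 0 then T else Tinv)"

definition alt_word :: "int list \<Rightarrow> 'a list \<Rightarrow> 'a letter list" where
  "alt_word ns as = concat (map (\<lambda>i. tpow (ns ! i) @ [L (as ! i)]) [0..<length ns])"

definition geodesic :: "('a, 'b) monoid_scheme \<Rightarrow> 'a set \<Rightarrow> ('a \<Rightarrow> 'a) \<Rightarrow> 'a letter list \<Rightarrow> bool" where
  "geodesic A C \<phi> w \<longleftrightarrow>
     (\<forall>v. valid_word A v \<longrightarrow> hnn_eq A C \<phi> v w \<longrightarrow> length w \<le> length v)"

end

(* The proof rests on Britton's lemma in the following form: two reduced words (no subword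
   t t^-1, t^-1 t, a b, 1, t c t^-1 with c in C, or t^-1 d t with d in phi(C)) representing the
   same element have the same sequence of t-exponents.  It is proved by van der Waerden's trick:
   words act on normal forms r_1 t^(e_1) ... r_k t^(e_k) g with chosen coset representatives r_i,
   the action respects the defining relations, and along a reduced word it never cancels, so the
   exponents can be read off the normal form.

   Any word v representing w reduces to a reduced word without gaining letters.  Appending to w
   one t-letter of the sign opposite to that of n_I yields a reduced word in which every a_i sits
   at a change of sign of the t-exponents, while in a reduced word each change of sign needs an
   A-letter in between.  Hence v has at least as many t-letters and as many A-letters as w. *)

theory Submission
  imports Defs "HOL-Library.Sublist"
begin

declare hnn_eq.trans [trans]

section \<open>Coset representatives\<close>

lemma (in group) subgroup_mult_right_iff:
  assumes "subgroup P G" "x \<in> carrier G" "h \<in> P"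
  shows "x \<otimes> h \<in> P \<longleftrightarrow> x \<in> P"
proof
  assume "x \<otimes> h \<in> P"
  then have "x \<otimes> h \<otimes> inv h \<in> P"
    using assms by (simp add: subgroup.m_closed subgroup.m_inv_closed)
  then show "x \<in> P"
    using assms by (simp add: m_assoc subgroup.mem_carrier)
qed (use assms in \<open>simp add: subgroup.m_closed\<close>)

context group
begin

definition coset_rep :: "'a set \<Rightarrow> 'a \<Rightarrow> 'a" where
  "coset_rep P g = (if g \<in> P then \<one> else (SOME r. r \<in> carrier G \<and> inv r \<otimes> g \<in> P))"

context
  fixes P assumes P: "subgroup P G"
begin

lemma
  assumes g: "g \<in> carrier G"
  shows coset_rep_closed: "coset_rep P g \<in> carrier G"
    and coset_rep_inv_mult: "inv (coset_rep P g) \<otimes> g \<in> P"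
proof -
  have "\<exists>r. r \<in> carrier G \<and> inv r \<otimes> g \<in> P"
    using g P by (intro exI[of _ g]) (simp add: subgroup.one_closed)
  from someI_ex[OF this]
  have "coset_rep P g \<in> carrier G \<and> inv (coset_rep P g) \<otimes> g \<in> P"
    using g unfolding coset_rep_def by auto
  then show "coset_rep P g \<in> carrier G" "inv (coset_rep P g) \<otimes> g \<in> P"
    by auto
qed

lemma coset_rep_eq_one_iff:
  assumes "g \<in> carrier G"
  shows "coset_rep P g = \<one> \<longleftrightarrow> g \<in> P"
  using coset_rep_inv_mult[OF assms] assms by (auto simp: coset_rep_def)

lemma coset_rep_mult:
  assumes g: "g \<in> carrier G" and h: "h \<in> P"
  shows "coset_rep P (g \<otimes> h) = coset_rep P g"
proof -
  have hc: "h \<in> carrier G" using P h by (simp add: subgroup.mem_carrier)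
  have "inv r \<otimes> (g \<otimes> h) \<in> P \<longleftrightarrow> inv r \<otimes> g \<in> P" if "r \<in> carrier G" for r
    using subgroup_mult_right_iff[OF P _ h, of "inv r \<otimes> g"] that g hc by (simp add: m_assoc)
  then have "(\<lambda>r. r \<in> carrier G \<and> inv r \<otimes> (g \<otimes> h) \<in> P) = (\<lambda>r. r \<in> carrier G \<and> inv r \<otimes> g \<in> P)"
    by blast
  moreover have "g \<otimes> h \<in> P \<longleftrightarrow> g \<in> P"
    using subgroup_mult_right_iff[OF P g h] .
  ultimately show ?thesis
    unfolding coset_rep_def by simp
qed

lemma coset_rep_idem:
  assumes g: "g \<in> carrier G"
  shows "coset_rep P (coset_rep P g) = coset_rep P g"
proof -
  let ?r = "coset_rep P g"
  have "?r \<otimes> (inv ?r \<otimes> g) = g"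
    using coset_rep_closed[OF g] g by (simp add: m_assoc[symmetric])
  then show ?thesis
    using coset_rep_mult[OF coset_rep_closed coset_rep_inv_mult, OF g g] by simp
qed

end

end

fun t_letter :: "bool \<Rightarrow> 'a letter" where
  "t_letter True = T"
| "t_letter False = Tinv"

lemma t_letter_eq_iff [simp]: "t_letter e = t_letter e' \<longleftrightarrow> e = e'"
  and t_letter_neq_L [simp]: "t_letter e \<noteq> L a" "L a \<noteq> t_letter e"
  by (cases e; cases e'; simp)+

lemma letter_cases [case_names L t_letter]:
  obtains a where "l = L a" | e where "l = t_letter e"
  by (metis letter.exhaust t_letter.simps)

fun t_signs :: "'a letter list \<Rightarrow> bool list" where
  "t_signs [] = []"
| "t_signs (T # u) = True # t_signs u"
| "t_signs (Tinv # u) = False # t_signs u"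
| "t_signs (L a # u) = t_signs u"

fun a_count :: "'a letter list \<Rightarrow> nat" where
  "a_count [] = 0"
| "a_count (L a # u) = Suc (a_count u)"
| "a_count (_ # u) = a_count u"

lemma t_signs_t_letter [simp]: "t_signs (t_letter e # u) = e # t_signs u"
  and a_count_t_letter [simp]: "a_count (t_letter e # u) = a_count u"
  by (cases e; simp)+

lemma t_signs_append [simp]: "t_signs (u @ v) = t_signs u @ t_signs v"
  by (induction u rule: t_signs.induct) auto

lemma a_count_append [simp]: "a_count (u @ v) = a_count u + a_count v"
  by (induction u rule: a_count.induct) auto

lemma length_eq_t_signs_a_count: "length u = length (t_signs u) + a_count u"
  by (induction u rule: t_signs.induct) auto

lemma t_signs_last_split:
  assumes "t_signs u \<noteq> []"
  shows "\<exists>x y. u = x @ t_letter (last (t_signs u)) # y \<and> t_signs y = []"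
  using assms
proof (induction u rule: rev_induct)
  case (snoc l u)
  show ?case
  proof (cases l rule: letter_cases)
    case (L a)
    with snoc obtain x y where "u = x @ t_letter (last (t_signs u)) # y" "t_signs y = []"
      by auto
    with L show ?thesis
      by (intro exI[of _ x] exI[of _ "y @ [l]"]) simp
  next
    case (t_letter e)
    then show ?thesis
      by (intro exI[of _ u] exI[of _ "[]"]) simp
  qed
qed simp

lemma t_signs_replicate [simp]: "t_signs (replicate k (t_letter e)) = replicate k e"
  and a_count_replicate [simp]: "a_count (replicate k (t_letter e)) = 0"
  by (induction k) auto

lemma tpow_eq_replicate: "tpow n = replicate (nat \<bar>n\<bar>) (t_letter (0 < n))"
  by (simp add: tpow_def)

lemma alt_word_Nil [simp]: "alt_word [] as = []"
  by (simp add: alt_word_def)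

lemma alt_word_Cons [simp]: "alt_word (n # ns) (a # as) = tpow n @ L a # alt_word ns as"
  by (simp add: alt_word_def map_upt_Suc del: upt_Suc)

lemma a_count_alt_word: "length as = length ns \<Longrightarrow> a_count (alt_word ns as) = length ns"
proof (induction ns arbitrary: as)
  case (Cons n ns)
  then show ?case by (cases as) (auto simp: tpow_eq_replicate)
qed simp

section \<open>Normal forms in the HNN extension\<close>

locale hnn_extension = group A for A :: "('a, 'b) monoid_scheme" (structure) +
  fixes C :: "'a set" and \<phi> :: "'a \<Rightarrow> 'a"
  assumes subgroup_C: "subgroup C A"
    and hom_\<phi>: "\<phi> \<in> hom (A\<lparr>carrier := C\<rparr>) A"
    and inj_\<phi>: "inj_on \<phi> C"
begin

abbreviation hnn_equiv :: "'a letter list \<Rightarrow> 'a letter list \<Rightarrow> bool" (infix "\<approx>" 50)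
  where "u \<approx> v \<equiv> hnn_eq A C \<phi> u v"

text \<open>Every \<open>x \<in> left_sub e\<close> satisfies \<open>x \<cdot> t_letter e = t_letter e \<cdot> cross e x\<close> in the HNN
  extension, and \<open>cross e\<close> is an isomorphism from \<open>left_sub e\<close> onto \<open>right_sub e\<close>.\<close>

definition left_sub :: "bool \<Rightarrow> 'a set" where
  "left_sub e = (if e then \<phi> ` C else C)"

definition right_sub :: "bool \<Rightarrow> 'a set" where
  "right_sub e = (if e then C else \<phi> ` C)"

definition cross :: "bool \<Rightarrow> 'a \<Rightarrow> 'a" where
  "cross e = (if e then the_inv_into C \<phi> else \<phi>)"

lemma right_sub_Not [simp]: "right_sub (\<not> e) = left_sub e"
  and left_sub_Not [simp]: "left_sub (\<not> e) = right_sub e"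
  by (simp_all add: left_sub_def right_sub_def)

lemma \<phi>_mult: "c \<in> C \<Longrightarrow> c' \<in> C \<Longrightarrow> \<phi> (c \<otimes> c') = \<phi> c \<otimes> \<phi> c'"
  using hom_\<phi> by (auto simp: hom_def)

lemma subgroup_\<phi>_image: "subgroup (\<phi> ` C) A"
proof -
  have "group_hom (A\<lparr>carrier := C\<rparr>) A \<phi>"
    using subgroup_imp_group[OF subgroup_C] hom_\<phi> is_group
    by (simp add: group_hom_def group_hom_axioms_def)
  then show ?thesis
    using group_hom.img_is_subgroup by fastforce
qed

lemma subgroup_left_sub: "subgroup (left_sub e) A"
  and subgroup_right_sub: "subgroup (right_sub e) A"
  using subgroup_C subgroup_\<phi>_image by (simp_all add: left_sub_def right_sub_def)

lemmas left_sub_carrier = subgroup.mem_carrier[OF subgroup_left_sub]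
lemmas right_sub_carrier = subgroup.mem_carrier[OF subgroup_right_sub]

lemma cross_closed: "x \<in> left_sub e \<Longrightarrow> cross e x \<in> right_sub e"
  by (auto simp: left_sub_def right_sub_def cross_def the_inv_into_f_f[OF inj_\<phi>])

lemma cross_inverse: "x \<in> left_sub e \<Longrightarrow> cross (\<not> e) (cross e x) = x"
  by (auto simp: left_sub_def cross_def the_inv_into_f_f[OF inj_\<phi>])

lemma cross_mult:
  assumes "x \<in> left_sub e" "y \<in> left_sub e"
  shows "cross e (x \<otimes> y) = cross e x \<otimes> cross e y"
proof (cases e)
  case True
  then obtain c c' where "c \<in> C" "c' \<in> C" "x = \<phi> c" "y = \<phi> c'"
    using assms by (auto simp: left_sub_def)
  then show ?thesis
    using True subgroup.m_closed[OF subgroup_C]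
    by (simp add: cross_def \<phi>_mult[symmetric] the_inv_into_f_f[OF inj_\<phi>])
qed (use assms in \<open>simp add: cross_def left_sub_def \<phi>_mult\<close>)

text \<open>A state \<open>(g, [(e\<^sub>k, r\<^sub>k), \<dots>, (e\<^sub>1, r\<^sub>1)])\<close> stands for
  \<open>r\<^sub>1 t\<^bsup>e\<^sub>1\<^esup> \<cdots> r\<^sub>k t\<^bsup>e\<^sub>k\<^esup> g\<close>, where \<open>r\<^sub>i\<close> is the chosen representative of its coset modulo
  \<open>left_sub e\<^sub>i\<close>; letters act by right multiplication.\<close>

definition act_t :: "bool \<Rightarrow> 'a \<times> (bool \<times> 'a) list \<Rightarrow> 'a \<times> (bool \<times> 'a) list" where
  "act_t e x = (case x of (g, ts) \<Rightarrow>
     if g \<in> left_sub e \<and> ts \<noteq> [] \<and> fst (hd ts) = (\<not> e) then (snd (hd ts) \<otimes> cross e g, tl ts)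
     else let r = coset_rep (left_sub e) g in (cross e (inv r \<otimes> g), (e, r) # ts))"

fun act :: "'a letter \<Rightarrow> 'a \<times> (bool \<times> 'a) list \<Rightarrow> 'a \<times> (bool \<times> 'a) list" where
  "act T x = act_t True x"
| "act Tinv x = act_t False x"
| "act (L a) (g, ts) = (if a \<in> carrier A then (g \<otimes> a, ts) else (g, ts))"

lemma act_t_letter [simp]: "act (t_letter e) = act_t e"
  by (cases e) auto

lemma act_t_cancel: "g \<in> left_sub e \<Longrightarrow> act_t e (g, (\<not> e, r) # ts) = (r \<otimes> cross e g, ts)"
  by (simp add: act_t_def)

lemma act_t_push:
  "\<not> (g \<in> left_sub e \<and> ts \<noteq> [] \<and> fst (hd ts) = (\<not> e)) \<Longrightarrow>
    act_t e (g, ts) =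
      (cross e (inv (coset_rep (left_sub e) g) \<otimes> g), (e, coset_rep (left_sub e) g) # ts)"
  unfolding act_t_def by (auto simp: Let_def)

fun valid_stack :: "(bool \<times> 'a) list \<Rightarrow> bool" where
  "valid_stack [] = True"
| "valid_stack ((e, r) # ts) \<longleftrightarrow> r \<in> carrier A \<and> coset_rep (left_sub e) r = r
     \<and> (r = \<one> \<longrightarrow> ts = [] \<or> fst (hd ts) = e) \<and> valid_stack ts"

definition valid_state :: "'a \<times> (bool \<times> 'a) list \<Rightarrow> bool" where
  "valid_state x \<longleftrightarrow> fst x \<in> carrier A \<and> valid_stack (snd x)"

lemma valid_act_t:
  assumes "valid_state x"
  shows "valid_state (act_t e x)"
proof -
  obtain g ts where x: "x = (g, ts)" by fastforce
  have g: "g \<in> carrier A" and ts: "valid_stack ts"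
    using assms x by (auto simp: valid_state_def)
  show ?thesis
  proof (cases "g \<in> left_sub e \<and> ts \<noteq> [] \<and> fst (hd ts) = (\<not> e)")
    case True
    then obtain r ts' where "ts = (\<not> e, r) # ts'" by (cases ts) auto
    then show ?thesis
      using True ts x right_sub_carrier[OF cross_closed]
      by (simp add: act_t_cancel valid_state_def)
  next
    case False
    let ?r = "coset_rep (left_sub e) g"
    have "cross e (inv ?r \<otimes> g) \<in> carrier A"
      using right_sub_carrier[OF cross_closed[OF coset_rep_inv_mult[OF subgroup_left_sub g]]] .
    moreover have "?r = \<one> \<longrightarrow> ts = [] \<or> fst (hd ts) = e"
      using False coset_rep_eq_one_iff[OF subgroup_left_sub g] by auto
    ultimately show ?thesis
      using False x ts coset_rep_closed[OF subgroup_left_sub g]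
        coset_rep_idem[OF subgroup_left_sub g]
      by (simp add: act_t_push valid_state_def)
  qed
qed

lemma valid_act:
  assumes "valid_state x"
  shows "valid_state (act l x)"
proof (cases l rule: letter_cases)
  case (L a)
  then show ?thesis using assms by (cases x) (simp add: valid_state_def)
qed (simp add: valid_act_t assms)

lemma valid_fold_act: "valid_state x \<Longrightarrow> valid_state (fold act u x)"
  by (induction u arbitrary: x) (auto simp: valid_act)

lemma act_t_inverse:
  assumes "valid_state x"
  shows "act_t (\<not> e) (act_t e x) = x"
proof -
  obtain g ts where x: "x = (g, ts)" by fastforce
  have g: "g \<in> carrier A" and ts: "valid_stack ts"
    using assms x by (auto simp: valid_state_def)
  show ?thesis
  proof (cases "g \<in> left_sub e \<and> ts \<noteq> [] \<and> fst (hd ts) = (\<not> e)")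
    case True
    then obtain r ts' where ts_eq: "ts = (\<not> e, r) # ts'" by (cases ts) auto
    have r: "r \<in> carrier A" "coset_rep (right_sub e) r = r"
      "r = \<one> \<longrightarrow> ts' = [] \<or> fst (hd ts') = (\<not> e)"
      using ts ts_eq by auto
    have cg: "cross e g \<in> right_sub e"
      using True cross_closed by blast
    have rep: "coset_rep (right_sub e) (r \<otimes> cross e g) = r"
      using coset_rep_mult[OF subgroup_right_sub r(1) cg] r(2) by simp
    have "r \<otimes> cross e g \<in> carrier A"
      using r(1) right_sub_carrier[OF cg] by simp
    then have "r \<otimes> cross e g \<in> right_sub e \<longleftrightarrow> r = \<one>"
      using coset_rep_eq_one_iff[OF subgroup_right_sub] rep by metis
    then have "act_t (\<not> e) (r \<otimes> cross e g, ts')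
        = (cross (\<not> e) (inv r \<otimes> (r \<otimes> cross e g)), (\<not> e, r) # ts')"
      using act_t_push[of "r \<otimes> cross e g" "\<not> e" ts'] rep r(3) by auto
    also have "\<dots> = x"
      using x ts_eq True r(1) right_sub_carrier[OF cg] cross_inverse
      by (simp add: m_assoc[symmetric])
    finally show ?thesis
      using True x ts_eq by (simp add: act_t_cancel)
  next
    case False
    let ?r = "coset_rep (left_sub e) g"
    have "cross e (inv ?r \<otimes> g) \<in> left_sub (\<not> e)"
      using cross_closed[OF coset_rep_inv_mult[OF subgroup_left_sub g]] by simp
    then have "act_t (\<not> e) (act_t e x) = (?r \<otimes> cross (\<not> e) (cross e (inv ?r \<otimes> g)), ts)"
      using False x act_t_cancel[of _ "\<not> e"] by (simp add: act_t_push)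
    also have "\<dots> = x"
      using x g coset_rep_closed[OF subgroup_left_sub g] coset_rep_inv_mult[OF subgroup_left_sub g]
      by (simp add: cross_inverse m_assoc[symmetric])
    finally show ?thesis .
  qed
qed

lemma act_t_conj:
  assumes "valid_state x" and d: "d \<in> left_sub e"
  shows "act (L (cross e d)) (act_t e x) = act_t e (act (L d) x)"
proof -
  obtain g ts where x: "x = (g, ts)" by fastforce
  have g: "g \<in> carrier A" and ts: "valid_stack ts"
    using assms x by (auto simp: valid_state_def)
  have dc: "d \<in> carrier A" and cdc: "cross e d \<in> carrier A"
    using d left_sub_carrier right_sub_carrier[OF cross_closed] by auto
  have in_iff: "g \<otimes> d \<in> left_sub e \<longleftrightarrow> g \<in> left_sub e"
    using subgroup_mult_right_iff[OF subgroup_left_sub g d] .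
  show ?thesis
  proof (cases "g \<in> left_sub e \<and> ts \<noteq> [] \<and> fst (hd ts) = (\<not> e)")
    case True
    then obtain r ts' where ts_eq: "ts = (\<not> e, r) # ts'" by (cases ts) auto
    have "r \<in> carrier A" using ts ts_eq by simp
    then show ?thesis
      using True x ts_eq d dc cdc in_iff left_sub_carrier right_sub_carrier[OF cross_closed]
      by (simp add: act_t_cancel cross_mult m_assoc)
  next
    case False
    let ?r = "coset_rep (left_sub e) g"
    have "inv ?r \<otimes> g \<in> left_sub e"
      using coset_rep_inv_mult[OF subgroup_left_sub g] .
    from cross_mult[OF this d] show ?thesis
      using False x d dc cdc in_iff g coset_rep_closed[OF subgroup_left_sub g]
        coset_rep_mult[OF subgroup_left_sub g d] left_sub_carrier right_sub_carrier[OF cross_closed]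
      by (simp add: act_t_push cross_mult m_assoc)
  qed
qed

lemma fold_act_cong:
  assumes "u \<approx> v" and "valid_state x"
  shows "fold act u x = fold act v x"
  using assms
proof (induction arbitrary: x rule: hnn_eq.induct)
  case (ctxt u v p q)
  then show ?case using valid_fold_act by simp
next
  case t_tinv
  then show ?case using act_t_inverse[of x True] by simp
next
  case tinv_t
  then show ?case using act_t_inverse[of x False] by simp
next
  case one
  then show ?case by (cases x) (simp add: valid_state_def)
next
  case (mult a b)
  then show ?case by (cases x) (simp add: valid_state_def m_assoc)
next
  case (conj c)
  then have "\<phi> c \<in> left_sub True" and "cross True (\<phi> c) = c"
    by (simp_all add: cross_def left_sub_def the_inv_into_f_f[OF inj_\<phi>])
  with act_t_conj[OF conj.prems this(1)] show ?case by simp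
qed auto

abbreviation normal_form :: "'a letter list \<Rightarrow> 'a \<times> (bool \<times> 'a) list" where
  "normal_form u \<equiv> fold act u (\<one>, [])"

lemma normal_form_cong: "u \<approx> v \<Longrightarrow> normal_form u = normal_form v"
  by (simp add: fold_act_cong valid_state_def)

lemma t_letter_cancel: "[t_letter e, t_letter (\<not> e)] \<approx> []"
  by (cases e) (simp_all add: hnn_eq.t_tinv hnn_eq.tinv_t)

lemma t_letter_conj:
  assumes "x \<in> left_sub e"
  shows "[L x, t_letter e] \<approx> [t_letter e, L (cross e x)]"
proof (cases e)
  case True
  then obtain c where "c \<in> C" "x = \<phi> c"
    using assms by (auto simp: left_sub_def)
  then show ?thesis
    using True hnn_eq.sym[OF hnn_eq.conj] by (simp add: cross_def the_inv_into_f_f[OF inj_\<phi>])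
next
  case False
  then have x: "x \<in> C" and cross: "cross e x = \<phi> x"
    using assms by (simp_all add: left_sub_def cross_def)
  have "[L x, Tinv] \<approx> [Tinv, T, L x, Tinv]"
    using hnn_eq.sym[OF hnn_eq.ctxt[OF hnn_eq.tinv_t, where x = "[]" and y = "[L x, Tinv]"]] by simp
  also have "\<dots> \<approx> [Tinv, L (\<phi> x), T, Tinv]"
    using hnn_eq.ctxt[OF hnn_eq.conj[OF x], where x = "[Tinv]" and y = "[Tinv]"] by simp
  also have "\<dots> \<approx> [Tinv, L (\<phi> x)]"
    using hnn_eq.ctxt[OF hnn_eq.t_tinv, where x = "[Tinv, L (\<phi> x)]" and y = "[]"] by simp
  finally show ?thesis
    using False cross by simp
qed

lemma pinch_equiv:
  assumes "c \<in> right_sub e"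
  shows "[t_letter e, L c, t_letter (\<not> e)] \<approx> [L (cross (\<not> e) c)]"
proof -
  let ?c' = "cross (\<not> e) c"
  have c': "?c' \<in> left_sub e" and "cross e ?c' = c"
    using assms cross_closed[of c "\<not> e"] cross_inverse[of c "\<not> e"] by simp_all
  then have "[t_letter e, L c, t_letter (\<not> e)] \<approx> [L ?c', t_letter e, t_letter (\<not> e)]"
    using hnn_eq.sym[OF hnn_eq.ctxt[OF t_letter_conj[OF c'], where x = "[]" and y = "[t_letter (\<not> e)]"]]
    by simp
  also have "\<dots> \<approx> [L ?c']"
    using hnn_eq.ctxt[OF t_letter_cancel, where x = "[L ?c']" and y = "[]"] by simp
  finally show ?thesis .
qed

section \<open>Reduced words\<close>

definition carrier_word :: "'a letter list \<Rightarrow> bool" where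
  "carrier_word u \<longleftrightarrow> (\<forall>a. L a \<in> set u \<longrightarrow> a \<in> carrier A)"

lemma carrier_word_append [simp]: "carrier_word (u @ v) \<longleftrightarrow> carrier_word u \<and> carrier_word v"
  by (auto simp: carrier_word_def)

inductive redex :: "'a letter list \<Rightarrow> bool" where
  cancel: "redex [t_letter e, t_letter (\<not> e)]"
| merge: "redex [L a, L b]"
| unit: "redex [L \<one>]"
| pinch: "c \<in> right_sub e \<Longrightarrow> redex [t_letter e, L c, t_letter (\<not> e)]"

lemma redex_shorten:
  assumes "redex p" and "carrier_word p"
  shows "\<exists>q. p \<approx> q \<and> carrier_word q \<and> length (t_signs q) \<le> length (t_signs p)
    \<and> a_count q \<le> a_count p \<and> length q < length p"
  using assms(1)
proof cases
  case cancel
  then show ?thesis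
    by (intro exI[of _ "[]"]) (simp add: t_letter_cancel carrier_word_def)
next
  case (merge a b)
  with assms(2) show ?thesis
    by (intro exI[of _ "[L (a \<otimes> b)]"]) (auto simp: carrier_word_def hnn_eq.mult)
next
  case unit
  then show ?thesis
    by (intro exI[of _ "[]"]) (simp add: hnn_eq.one carrier_word_def)
next
  case (pinch c e)
  with assms(2) show ?thesis
    using pinch_equiv cross_closed[of c "\<not> e"] left_sub_carrier
    by (intro exI[of _ "[L (cross (\<not> e) c)]"]) (auto simp: carrier_word_def)
qed

definition reduced :: "'a letter list \<Rightarrow> bool" where
  "reduced u \<longleftrightarrow> (\<forall>p. sublist p u \<longrightarrow> \<not> redex p)"

lemma reduced_sublist: "reduced u \<Longrightarrow> sublist v u \<Longrightarrow> reduced v"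
  unfolding reduced_def by (meson sublist_order.order.trans)

lemma redex_not_reduced: "redex p \<Longrightarrow> \<not> reduced (x @ p @ y)"
  by (auto simp: reduced_def)

lemma reduced_Cons_iff:
  "reduced (l # u) \<longleftrightarrow> reduced u \<and> (\<forall>p w. l # u = p @ w \<longrightarrow> \<not> redex p)"
  by (auto simp: reduced_def sublist_Cons_right prefix_def)

lemma exists_reduced_equiv:
  "carrier_word v \<Longrightarrow> \<exists>u. v \<approx> u \<and> reduced u \<and> carrier_word u
     \<and> length (t_signs u) \<le> length (t_signs v) \<and> a_count u \<le> a_count v"
proof (induction "length v" arbitrary: v rule: less_induct)
  case less
  show ?case
  proof (cases "reduced v")
    case True
    then show ?thesis using less.prems hnn_eq.refl by blast
  next
    case False
    then obtain x p y where v: "v = x @ p @ y" and "redex p"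
      by (auto simp: reduced_def sublist_def)
    then obtain q where q: "p \<approx> q" "carrier_word q" "length (t_signs q) \<le> length (t_signs p)"
      "a_count q \<le> a_count p" "length q < length p"
      using redex_shorten less.prems by fastforce
    let ?v' = "x @ q @ y"
    have "v \<approx> ?v'"
      using hnn_eq.ctxt[OF q(1)] v by simp
    moreover obtain u where "?v' \<approx> u" "reduced u" "carrier_word u"
      "length (t_signs u) \<le> length (t_signs ?v')" "a_count u \<le> a_count ?v'"
      using less.hyps[of ?v'] less.prems q v by auto
    ultimately show ?thesis
      using q v by (auto intro: hnn_eq.trans)
  qed
qed

section \<open>Britton's lemma\<close>

lemma reduced_without_t_letters:
  assumes "reduced y" and "t_signs y = []"
  obtains "y = []" | a where "y = [L a]"
proof -
  consider "y = []" | l where "y = [l]" | l l' y' where "y = l # l' # y'"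
    by (cases y rule: remdups_adj.cases) auto
  then show thesis
  proof cases
    case (2 l)
    with assms(2) that(2) show ?thesis
      by (cases l rule: letter_cases) auto
  next
    case (3 l l' y')
    with assms(2) obtain a b where "y = [L a, L b] @ y'"
      by (cases l rule: letter_cases; cases l' rule: letter_cases) auto
    with assms(1) redex_not_reduced[OF redex.merge[of a b], of "[]" y'] show ?thesis
      by simp
  qed (use that in simp)
qed

definition normal_form_invariant :: "'a letter list \<Rightarrow> bool" where
  "normal_form_invariant u \<longleftrightarrow> map fst (snd (normal_form u)) = rev (t_signs u)
     \<and> (\<forall>x e. u = x @ [t_letter e] \<longrightarrow> fst (normal_form u) \<in> right_sub e)
     \<and> (\<forall>x e a. u = x @ [t_letter e, L a] \<longrightarrow> fst (normal_form u) \<otimes> inv a \<in> right_sub e)"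

lemma no_cancellation:
  assumes red: "reduced (u @ [t_letter e])" and "carrier_word u"
    and inv: "normal_form_invariant u" and nf: "normal_form u = (g, ts)"
    and g: "g \<in> left_sub e" and "ts \<noteq> []"
  shows "fst (hd ts) = e"
proof (rule ccontr)
  assume "fst (hd ts) \<noteq> e"
  moreover have "map fst ts = rev (t_signs u)"
    using inv nf by (simp add: normal_form_invariant_def)
  ultimately have signs: "t_signs u \<noteq> []" and last: "last (t_signs u) = (\<not> e)"
    using \<open>ts \<noteq> []\<close> by (auto simp: hd_map[symmetric] hd_rev)
  obtain x y where u: "u = x @ t_letter (\<not> e) # y" and y: "t_signs y = []"
    using t_signs_last_split[OF signs] last by auto
  have "reduced ((x @ [t_letter (\<not> e)]) @ y @ [t_letter e])"
    using red u by simp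
  then have "reduced y"
    using reduced_sublist sublist_appendI by blast
  then consider "u = x @ [t_letter (\<not> e)]" | a where "u = x @ [t_letter (\<not> e), L a]"
    using u by (cases rule: reduced_without_t_letters[OF _ y]) auto
  then show False
  proof cases
    case 1
    with red redex_not_reduced[OF redex.cancel[of "\<not> e"], of x "[]"] show False
      by simp
  next
    case (2 a)
    have a: "a \<in> carrier A"
      using \<open>carrier_word u\<close> 2 by (simp add: carrier_word_def)
    have "g \<otimes> inv a \<in> left_sub e"
      using inv nf 2 by (simp add: normal_form_invariant_def)
    then have "inv (g \<otimes> inv a) \<otimes> g \<in> left_sub e"
      using subgroup.m_closed[OF subgroup_left_sub subgroup.m_inv_closed[OF subgroup_left_sub] g]
      by blast
    moreover have "inv (g \<otimes> inv a) \<otimes> g = a"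
      using left_sub_carrier[OF g] a by (simp add: inv_mult_group m_assoc)
    ultimately have "a \<in> right_sub (\<not> e)"
      by simp
    then have "redex [t_letter (\<not> e), L a, t_letter e]"
      using redex.pinch[of a "\<not> e"] by simp
    with red 2 redex_not_reduced[of _ x "[]"] show False
      by simp
  qed
qed

lemma reduced_normal_form_invariant:
  "reduced u \<Longrightarrow> carrier_word u \<Longrightarrow> normal_form_invariant u"
proof (induction u rule: rev_induct)
  case Nil
  then show ?case by (simp add: normal_form_invariant_def)
next
  case (snoc l u)
  have inv: "normal_form_invariant u"
    using snoc reduced_sublist[OF snoc.prems(1), of u] by simp
  obtain g ts where nf: "normal_form u = (g, ts)" by fastforce
  have g: "g \<in> carrier A"
    using valid_fold_act[of "(\<one>, [])" u] nf by (simp add: valid_state_def)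
  have signs: "map fst ts = rev (t_signs u)"
    using inv nf by (simp add: normal_form_invariant_def)
  show ?case
  proof (cases l rule: letter_cases)
    case (L a)
    have a: "a \<in> carrier A"
      using snoc.prems(2) L by (simp add: carrier_word_def)
    have "g \<otimes> a \<otimes> inv a' \<in> right_sub e" if "u @ [l] = x @ [t_letter e, L a']" for x e a'
    proof -
      from that L have "u = x @ [t_letter e]" "a' = a" by auto
      then have "g \<in> right_sub e"
        using inv nf by (auto simp: normal_form_invariant_def)
      then show ?thesis using g a \<open>a' = a\<close> by (simp add: m_assoc)
    qed
    then show ?thesis
      using nf signs L a by (auto simp: normal_form_invariant_def)
  next
    case (t_letter e)
    let ?r = "coset_rep (left_sub e) g"
    have "\<not> (g \<in> left_sub e \<and> ts \<noteq> [] \<and> fst (hd ts) = (\<not> e))"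
      using no_cancellation[OF _ _ inv nf] snoc.prems t_letter by auto
    then have "normal_form (u @ [l]) = (cross e (inv ?r \<otimes> g), (e, ?r) # ts)"
      using nf t_letter by (simp add: act_t_push)
    moreover have "cross e (inv ?r \<otimes> g) \<in> right_sub e"
      using cross_closed[OF coset_rep_inv_mult[OF subgroup_left_sub g]] .
    ultimately show ?thesis
      using signs t_letter by (auto simp: normal_form_invariant_def)
  qed
qed

theorem reduced_equiv_t_signs:
  assumes "u \<approx> v" and "reduced u" "carrier_word u" and "reduced v" "carrier_word v"
  shows "t_signs u = t_signs v"
  using normal_form_cong[OF assms(1)] reduced_normal_form_invariant[OF assms(2,3)]
    reduced_normal_form_invariant[OF assms(4,5)]
  by (simp add: normal_form_invariant_def)

lemma reduced_sign_changes_le: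
  "reduced u \<Longrightarrow>
    length (remdups_adj (t_signs u)) \<le> a_count u + of_bool (\<exists>e w. u = t_letter e # w)"
proof (induction u)
  case (Cons l u)
  then have IH: "length (remdups_adj (t_signs u)) \<le> a_count u + 1"
    by (auto simp: reduced_Cons_iff of_bool_def split: if_splits)
  show ?case
  proof (cases l rule: letter_cases)
    case (L a)
    with IH show ?thesis by simp
  next
    case (t_letter e)
    show ?thesis
    proof (cases "t_signs u")
      case (Cons e' es)
      show ?thesis
      proof (cases "e' = e")
        case True
        with IH t_letter Cons show ?thesis by simp
      next
        case False
        then obtain l' u' where u: "u = l' # u'"
          using Cons by (cases u) auto
        have "\<not> (\<exists>e w. u = t_letter e # w)"
        proof
          assume "\<exists>e w. u = t_letter e # w"
          then have "u = t_letter (\<not> e) # u'"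
            using Cons False u by auto
          then show False
            using Cons.prems t_letter redex_not_reduced[OF redex.cancel[of e], of "[]" u'] by simp
        qed
        with Cons.IH Cons.prems t_letter Cons False show ?thesis
          by (auto simp: reduced_Cons_iff)
      qed
    qed (simp add: t_letter)
  qed
qed simp

lemma reduced_sign_changes: "reduced u \<Longrightarrow> length (remdups_adj (t_signs u)) \<le> a_count u + 1"
  using reduced_sign_changes_le[of u] by (simp add: of_bool_def split: if_splits)

section \<open>Alternating words\<close>

lemma reduced_Nil [simp]: "reduced []"
  by (auto simp: reduced_def elim: redex.cases)

lemma reduced_L_Cons: "reduced (t_letter e # w) \<Longrightarrow> a \<noteq> \<one> \<Longrightarrow> reduced (L a # t_letter e # w)"
  by (auto simp: reduced_Cons_iff elim!: redex.cases)

lemma reduced_t_block: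
  assumes "reduced (L a # t_letter (\<not> s) # w)" and "a \<notin> right_sub s"
  shows "reduced (replicate k (t_letter s) @ L a # t_letter (\<not> s) # w)"
proof (induction k)
  case (Suc k)
  with assms show ?case
    by (cases k) (auto simp: reduced_Cons_iff elim!: redex.cases)
qed (use assms in simp)

definition alternating :: "bool \<Rightarrow> int list \<Rightarrow> 'a list \<Rightarrow> bool" where
  "alternating s ns as \<longleftrightarrow> length as = length ns \<and>
    (\<forall>i < length ns. ns ! i \<noteq> 0 \<and> (0 < ns ! i \<longleftrightarrow> (s \<longleftrightarrow> even i))
       \<and> as ! i \<in> carrier A \<and> as ! i \<noteq> \<one> \<and> as ! i \<notin> right_sub (0 < ns ! i))"

lemma alternating_Nil_iff: "alternating s [] as \<longleftrightarrow> as = []"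
  by (simp add: alternating_def)

lemma alternating_Cons_iff:
  "alternating s (n # ns) as \<longleftrightarrow> (\<exists>a as'. as = a # as' \<and> n \<noteq> 0 \<and> (0 < n \<longleftrightarrow> s)
     \<and> a \<in> carrier A \<and> a \<noteq> \<one> \<and> a \<notin> right_sub s \<and> alternating (\<not> s) ns as')"
  by (cases as) (auto simp: alternating_def All_less_Suc2)

lemma carrier_word_alt_word: "alternating s ns as \<Longrightarrow> carrier_word (alt_word ns as)"
proof (induction ns arbitrary: s as)
  case (Cons n ns)
  then show ?case
    by (auto simp: alternating_Cons_iff carrier_word_def tpow_def)
qed (simp add: carrier_word_def)

text \<open>The extra letter makes the last \<open>a\<^sub>I\<close>, like every \<open>a\<^sub>i\<close>, sit between two t-letters of
  opposite sign, so that each \<open>a\<^sub>i\<close> accounts for one change of sign of the t-letters.\<close>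

definition closed_alt_word :: "bool \<Rightarrow> int list \<Rightarrow> 'a list \<Rightarrow> 'a letter list" where
  "closed_alt_word s ns as = alt_word ns as @ [t_letter (s \<longleftrightarrow> even (length ns))]"

lemma closed_alt_word_Cons:
  "closed_alt_word s (n # ns) (a # as) = tpow n @ L a # closed_alt_word (\<not> s) ns as"
  by (cases s) (simp_all add: closed_alt_word_def)

lemma alternating_closed_alt_word:
  "alternating s ns as \<Longrightarrow> reduced (closed_alt_word s ns as)
    \<and> (\<exists>w. closed_alt_word s ns as = t_letter s # w)
    \<and> length (remdups_adj (t_signs (closed_alt_word s ns as))) = Suc (length ns)"
proof (induction ns arbitrary: s as)
  case Nil
  then show ?case
    by (auto simp: alternating_Nil_iff closed_alt_word_def reduced_Cons_iff elim: redex.cases)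
next
  case (Cons n ns)
  then obtain a as' where as: "as = a # as'" and n: "n \<noteq> 0" "0 < n \<longleftrightarrow> s"
    and a: "a \<noteq> \<one>" "a \<notin> right_sub s" and alt: "alternating (\<not> s) ns as'"
    by (auto simp: alternating_Cons_iff)
  then obtain w where IH: "reduced (t_letter (\<not> s) # w)"
    "closed_alt_word (\<not> s) ns as' = t_letter (\<not> s) # w"
    "length (remdups_adj ((\<not> s) # t_signs w)) = Suc (length ns)"
    using Cons.IH[OF alt] by auto
  obtain k where k: "nat \<bar>n\<bar> = Suc k"
    using n(1) by (cases "nat \<bar>n\<bar>") auto
  have word:
    "closed_alt_word s (n # ns) as = replicate (Suc k) (t_letter s) @ L a # t_letter (\<not> s) # w"
    using as IH(2) k n(2) by (simp add: closed_alt_word_Cons tpow_eq_replicate)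
  have "reduced (closed_alt_word s (n # ns) as)"
    unfolding word by (rule reduced_t_block[OF reduced_L_Cons[OF IH(1) a(1)] a(2)])
  moreover have "remdups_adj (replicate (Suc k) s @ (\<not> s) # t_signs w)
      = s # remdups_adj ((\<not> s) # t_signs w)"
    by (subst remdups_adj_append') (simp_all add: remdups_adj_replicate del: replicate_Suc)
  ultimately show ?case
    using IH(3) by (simp add: word)
qed

lemma alt_word_length_le:
  assumes alt: "alternating s ns as" and "carrier_word v" and eq: "v \<approx> alt_word ns as"
  shows "length (alt_word ns as) \<le> length v"
proof -
  let ?t = "t_letter (s \<longleftrightarrow> even (length ns))"
  let ?w = "closed_alt_word s ns as"
  have w: "reduced ?w" "carrier_word ?w" "length (remdups_adj (t_signs ?w)) = Suc (length ns)"
    using alternating_closed_alt_word[OF alt] carrier_word_alt_word[OF alt]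
    by (auto simp: closed_alt_word_def carrier_word_def)
  obtain u where u: "v @ [?t] \<approx> u" "reduced u" "carrier_word u"
    "length (t_signs u) \<le> length (t_signs v) + 1" "a_count u \<le> a_count v"
    using exists_reduced_equiv[of "v @ [?t]"] \<open>carrier_word v\<close> by (auto simp: carrier_word_def)
  have "v @ [?t] \<approx> ?w"
    using hnn_eq.ctxt[OF eq, where x = "[]" and y = "[?t]"] by (simp add: closed_alt_word_def)
  then have "t_signs u = t_signs ?w"
    using reduced_equiv_t_signs u w by (meson hnn_eq.sym hnn_eq.trans)
  then have "length ns \<le> a_count v" and "length (t_signs (alt_word ns as)) \<le> length (t_signs v)"
    using reduced_sign_changes[OF u(2)] w(3) u(4,5) by (simp_all add: closed_alt_word_def)
  then show ?thesis
    using a_count_alt_word[of as ns] alt length_eq_t_signs_a_count[of v]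
      length_eq_t_signs_a_count[of "alt_word ns as"]
    by (simp add: alternating_def)
qed

end

theorem lemma7p1:
  fixes A :: "('a, 'b) monoid_scheme" and C :: "'a set" and \<phi> :: "'a \<Rightarrow> 'a"
    and ns :: "int list" and as :: "'a list"
  assumes "group A"
    and "subgroup C A"
    and "\<phi> \<in> hom (A\<lparr>carrier := C\<rparr>) A"
    and "inj_on \<phi> C"
    and "C \<noteq> carrier A"
    and "\<phi> ` C \<noteq> carrier A"
    and "length as = length ns"
    and "\<forall>i < length ns. ns ! i \<noteq> 0"
    and "\<forall>i < length as. as ! i \<in> carrier A \<and> as ! i \<noteq> \<one>\<^bsub>A\<^esub>"
    and "(\<forall>i < length ns. (even i \<longrightarrow> ns ! i > 0 \<and> as ! i \<notin> C)
                        \<and> (odd i \<longrightarrow> ns ! i < 0 \<and> as ! i \<notin> \<phi> ` C))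
       \<or> (\<forall>i < length ns. (even i \<longrightarrow> ns ! i < 0 \<and> as ! i \<notin> \<phi> ` C)
                        \<and> (odd i \<longrightarrow> ns ! i > 0 \<and> as ! i \<notin> C))"
  shows "geodesic A C \<phi> (alt_word ns as)"
proof -
  interpret hnn_extension A C \<phi>
    using assms(1-4) by (simp add: hnn_extension_def hnn_extension_axioms_def)
  have "alternating True ns as \<or> alternating False ns as"
    using assms(7-10) by (auto simp: alternating_def right_sub_def)
  then obtain s where "alternating s ns as"
    by blast
  then show ?thesis
    using alt_word_length_le
    by (auto simp: geodesic_def valid_word_def carrier_word_def)
qed

end
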